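(* Let $(A,\cdot,\circ)$ be a skew brace such that $A = B\circ C$ (i.e. every element of $A$ is of the form $b\circ c$ with $b\in B$, $c\in C$) for some sub-skew braces $B$ and $C$ satisfying all of the following: (1) $B$ and $C$ are trivial skew braces; (2) $B$ and $C$ are normal subgroups of $(A,\circ)$; (3) $B$ and $C$ are right ideals in $A$. Then $A^3 := A*A' = 1$, where $A' = A*A$; that is, $A$ is left nilpotent of index at most $3$.
   Context: A skew brace is a set $A$ with two group operations $\cdot$ (often written by juxtaposition) and $\circ$ such that $a\circ(bc) = (a\circ b)\,a^{-1}\,(a\circ c)$ for all $a,b,c\in A$. The two groups have the same identity $1$; $a^{-1}$ denotes the inverse of $a$ in $(A,\cdot)$ and $\overline{a}$ its inverse in $(A,\circ)$. Define $a*b = a^{-1}(a\circ b)b^{-1}$. For subsets $X,Y\subseteq A$, $X*Y$ denotes the subgroup of $(A,\cdot)$ generated by all $x*y$ with $x\in X$, $y\in Y$. A sub-skew brace is a subset that is a subgroup of both $(A,\cdot)$ and $(A,\circ)$. A skew brace (or sub-skew brace) $B$ is trivial if $a\circ b = ab$ for all $a,b\in B$. A subgroup $I$ of $(A,\cdot)$ is a left ideal in $A$ if $A*I\subseteq I$, and a right ideal in $A$ if $I*A\subseteq I$. *)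

theory Defs
  imports "HOL-Algebra.Algebra"
begin

text \<open>A skew brace is given by two group structures on the same carrier:
  G is the group (A, \<cdot>) and H is the group (A, \<circ>).\<close>

definition skew_brace :: "'a monoid \<Rightarrow> 'a monoid \<Rightarrow> bool" where
  "skew_brace G H \<longleftrightarrow> group G \<and> group H \<and> carrier G = carrier H \<and>
     (\<forall>a\<in>carrier G. \<forall>b\<in>carrier G. \<forall>c\<in>carrier G.
        a \<otimes>\<^bsub>H\<^esub> (b \<otimes>\<^bsub>G\<^esub> c)
          = (a \<otimes>\<^bsub>H\<^esub> b) \<otimes>\<^bsub>G\<^esub> inv\<^bsub>G\<^esub> a \<otimes>\<^bsub>G\<^esub> (a \<otimes>\<^bsub>H\<^esub> c))"

definition sb_star :: "'a monoid \<Rightarrow> 'a monoid \<Rightarrow> 'a \<Rightarrow> 'a \<Rightarrow> 'a" where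
  "sb_star G H a b = inv\<^bsub>G\<^esub> a \<otimes>\<^bsub>G\<^esub> (a \<otimes>\<^bsub>H\<^esub> b) \<otimes>\<^bsub>G\<^esub> inv\<^bsub>G\<^esub> b"

definition sb_star_set :: "'a monoid \<Rightarrow> 'a monoid \<Rightarrow> 'a set \<Rightarrow> 'a set \<Rightarrow> 'a set" where
  "sb_star_set G H S T = generate G {w. \<exists>s\<in>S. \<exists>t\<in>T. w = sb_star G H s t}"

definition sub_skew_brace :: "'a monoid \<Rightarrow> 'a monoid \<Rightarrow> 'a set \<Rightarrow> bool" where
  "sub_skew_brace G H B \<longleftrightarrow> subgroup B G \<and> subgroup B H"

definition trivial_on :: "'a monoid \<Rightarrow> 'a monoid \<Rightarrow> 'a set \<Rightarrow> bool" where
  "trivial_on G H B \<longleftrightarrow> (\<forall>a\<in>B. \<forall>b\<in>B. a \<otimes>\<^bsub>H\<^esub> b = a \<otimes>\<^bsub>G\<^esub> b)"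

definition right_ideal :: "'a monoid \<Rightarrow> 'a monoid \<Rightarrow> 'a set \<Rightarrow> bool" where
  "right_ideal G H I \<longleftrightarrow> subgroup I G \<and> sb_star_set G H I (carrier G) \<subseteq> I"

end

theory Submission
  imports Defs
begin

text \<open>Write \<open>\<lambda>\<^sub>a x = a\<inverse>(a \<circ> x)\<close>, so that \<open>a * x = \<lambda>\<^sub>a(x) x\<inverse>\<close> and \<open>a \<mapsto> \<lambda>\<^sub>a\<close> is an action of
  \<open>(A,\<circ>)\<close> by automorphisms of \<open>(A,\<cdot>)\<close>; hence \<open>A*A' = 1\<close> means exactly that every \<open>\<lambda>\<^sub>a\<close> fixes
  every generator \<open>s * t\<close> of \<open>A'\<close>. Since \<open>B\<close> and \<open>C\<close> are right ideals, \<open>A = B C = C B\<close> as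
  \<open>\<cdot>\<close>-products, and \<open>(b \<circ> c) * t = (b * \<lambda>\<^sub>c t)(c * t)\<close> with the factors in \<open>B\<close> and \<open>C\<close>.
  Writing \<open>a = b\<^sub>1 \<circ> c\<^sub>1\<close>, \<open>\<lambda>\<^sub>a = \<lambda>\<^sub>b\<^sub>1 \<lambda>\<^sub>c\<^sub>1\<close>: triviality of \<open>B\<close> makes \<open>\<lambda>\<^sub>b\<^sub>1\<close> fix \<open>B\<close>, and for
  \<open>p \<in> B\<close>, \<open>z = g\<beta>\<close> with \<open>g \<in> C, \<beta> \<in> B\<close>, one has \<open>p * z = p * g\<close> and
  \<open>\<lambda>\<^sub>q\<lambda>\<^sub>p g = \<lambda>\<^sub>p\<lambda>\<^sub>q\<^sub>' g = \<lambda>\<^sub>p g\<close> for \<open>q \<in> C\<close> by normality of \<open>C\<close> in \<open>(A,\<circ>)\<close>, so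
  \<open>\<lambda>\<^sub>c\<^sub>1\<close> fixes \<open>B * A\<close>; symmetrically with \<open>B\<close> and \<open>C\<close> exchanged.\<close>

definition sb_lambda :: "'a monoid \<Rightarrow> 'a monoid \<Rightarrow> 'a \<Rightarrow> 'a \<Rightarrow> 'a" where
  "sb_lambda G H a x = inv\<^bsub>G\<^esub> a \<otimes>\<^bsub>G\<^esub> (a \<otimes>\<^bsub>H\<^esub> x)"

locale skew_brace_pair =
  fixes G H :: "'a monoid"
  assumes skew_brace: "skew_brace G H"
begin

sublocale G: group G
  using skew_brace unfolding skew_brace_def by blast

sublocale H: group H
  using skew_brace unfolding skew_brace_def by blast

lemma carrier_eq: "carrier H = carrier G"
  using skew_brace unfolding skew_brace_def by simp

lemma circ_mult_distrib:
  "\<lbrakk>a \<in> carrier G; b \<in> carrier G; c \<in> carrier G\<rbrakk> \<Longrightarrow>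
     a \<otimes>\<^bsub>H\<^esub> (b \<otimes>\<^bsub>G\<^esub> c) = (a \<otimes>\<^bsub>H\<^esub> b) \<otimes>\<^bsub>G\<^esub> inv\<^bsub>G\<^esub> a \<otimes>\<^bsub>G\<^esub> (a \<otimes>\<^bsub>H\<^esub> c)"
  using skew_brace unfolding skew_brace_def by blast

lemma circ_closed: "\<lbrakk>a \<in> carrier G; b \<in> carrier G\<rbrakk> \<Longrightarrow> a \<otimes>\<^bsub>H\<^esub> b \<in> carrier G"
  using H.m_closed carrier_eq by blast

lemma sb_lambda_closed: "\<lbrakk>a \<in> carrier G; x \<in> carrier G\<rbrakk> \<Longrightarrow> sb_lambda G H a x \<in> carrier G"
  unfolding sb_lambda_def by (simp add: circ_closed)

lemma circ_eq_mult_sb_lambda: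
  "\<lbrakk>a \<in> carrier G; x \<in> carrier G\<rbrakk> \<Longrightarrow> a \<otimes>\<^bsub>H\<^esub> x = a \<otimes>\<^bsub>G\<^esub> sb_lambda G H a x"
  unfolding sb_lambda_def by (simp add: circ_closed G.m_assoc[symmetric])

lemma sb_lambda_hom: "a \<in> carrier G \<Longrightarrow> sb_lambda G H a \<in> hom G G"
  by (rule homI) (simp_all add: sb_lambda_closed sb_lambda_def circ_mult_distrib circ_closed G.m_assoc)

lemma group_hom_sb_lambda: "a \<in> carrier G \<Longrightarrow> group_hom G G (sb_lambda G H a)"
  by (simp add: group_hom_def group_hom_axioms_def sb_lambda_hom G.group_axioms)

lemma sb_lambda_mult:
  "\<lbrakk>a \<in> carrier G; x \<in> carrier G; y \<in> carrier G\<rbrakk> \<Longrightarrow>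
     sb_lambda G H a (x \<otimes>\<^bsub>G\<^esub> y) = sb_lambda G H a x \<otimes>\<^bsub>G\<^esub> sb_lambda G H a y"
  by (simp add: hom_mult sb_lambda_hom)

lemma sb_lambda_one: "a \<in> carrier G \<Longrightarrow> sb_lambda G H a \<one>\<^bsub>G\<^esub> = \<one>\<^bsub>G\<^esub>"
  by (rule group_hom.hom_one[OF group_hom_sb_lambda])

lemma sb_lambda_inv:
  "\<lbrakk>a \<in> carrier G; x \<in> carrier G\<rbrakk> \<Longrightarrow> sb_lambda G H a (inv\<^bsub>G\<^esub> x) = inv\<^bsub>G\<^esub> sb_lambda G H a x"
  by (rule group_hom.hom_inv[OF group_hom_sb_lambda])

lemma sb_lambda_circ:
  assumes a: "a \<in> carrier G" and b: "b \<in> carrier G" and x: "x \<in> carrier G"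
  shows "sb_lambda G H (a \<otimes>\<^bsub>H\<^esub> b) x = sb_lambda G H a (sb_lambda G H b x)"
proof -
  have "(a \<otimes>\<^bsub>H\<^esub> b) \<otimes>\<^bsub>G\<^esub> sb_lambda G H (a \<otimes>\<^bsub>H\<^esub> b) x = a \<otimes>\<^bsub>H\<^esub> (b \<otimes>\<^bsub>H\<^esub> x)"
    using assms carrier_eq by (simp add: circ_eq_mult_sb_lambda[symmetric] circ_closed H.m_assoc)
  also have "\<dots> = a \<otimes>\<^bsub>H\<^esub> (b \<otimes>\<^bsub>G\<^esub> sb_lambda G H b x)"
    using b x by (simp add: circ_eq_mult_sb_lambda)
  also have "\<dots> = (a \<otimes>\<^bsub>H\<^esub> b) \<otimes>\<^bsub>G\<^esub> sb_lambda G H a (sb_lambda G H b x)"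
    using assms by (simp add: circ_mult_distrib sb_lambda_closed circ_closed sb_lambda_def G.m_assoc)
  finally show ?thesis
    using assms by (simp add: circ_closed sb_lambda_closed)
qed

lemma sb_star_eq: "sb_star G H a x = sb_lambda G H a x \<otimes>\<^bsub>G\<^esub> inv\<^bsub>G\<^esub> x"
  unfolding sb_star_def sb_lambda_def ..

lemma sb_star_closed: "\<lbrakk>a \<in> carrier G; x \<in> carrier G\<rbrakk> \<Longrightarrow> sb_star G H a x \<in> carrier G"
  by (simp add: sb_star_eq sb_lambda_closed)

lemma sb_star_circ:
  assumes b: "b \<in> carrier G" and c: "c \<in> carrier G" and t: "t \<in> carrier G"
  shows "sb_star G H (b \<otimes>\<^bsub>H\<^esub> c) t = sb_star G H b (sb_lambda G H c t) \<otimes>\<^bsub>G\<^esub> sb_star G H c t"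
  using assms
  by (simp add: sb_star_eq sb_lambda_circ sb_lambda_closed G.m_assoc)
    (simp add: sb_lambda_closed G.m_assoc[symmetric])

lemma sb_star_mult_fixed:
  assumes b: "b \<in> carrier G" and g: "g \<in> carrier G" and \<beta>: "\<beta> \<in> carrier G"
    and fixed: "sb_lambda G H b \<beta> = \<beta>"
  shows "sb_star G H b (g \<otimes>\<^bsub>G\<^esub> \<beta>) = sb_star G H b g"
  using assms
  by (simp add: sb_star_eq sb_lambda_mult sb_lambda_closed G.inv_mult_group G.m_assoc)
    (simp add: G.m_assoc[symmetric])

lemma sb_lambda_trivial:
  assumes "trivial_on G H S" "S \<subseteq> carrier G" "b \<in> S" "w \<in> S"
  shows "sb_lambda G H b w = w"
proof -
  have "b \<otimes>\<^bsub>H\<^esub> w = b \<otimes>\<^bsub>G\<^esub> w"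
    using assms(1,3,4) unfolding trivial_on_def by blast
  moreover have "b \<in> carrier G" "w \<in> carrier G"
    using assms(2-4) by blast+
  ultimately show ?thesis
    unfolding sb_lambda_def by (simp add: G.m_assoc[symmetric])
qed

lemma right_ideal_sb_star:
  assumes "right_ideal G H I" "x \<in> I" "t \<in> carrier G"
  shows "sb_star G H x t \<in> I"
proof -
  have "sb_star G H x t \<in> sb_star_set G H I (carrier G)"
    unfolding sb_star_set_def using assms(2,3) by (blast intro: generate.incl)
  then show ?thesis
    using assms(1) unfolding right_ideal_def by blast
qed

text \<open>\<open>x \<circ> y = x (x * y) y\<close>.\<close>

lemma right_ideal_circ_eq_mult:
  assumes I: "right_ideal G H I" and x: "x \<in> I" and y: "y \<in> carrier G"
  shows "\<exists>x'\<in>I. x \<otimes>\<^bsub>H\<^esub> y = x' \<otimes>\<^bsub>G\<^esub> y"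
proof
  have IG: "subgroup I G"
    using I unfolding right_ideal_def by blast
  then have xc: "x \<in> carrier G"
    using x subgroup.subset by blast
  show "x \<otimes>\<^bsub>G\<^esub> sb_star G H x y \<in> I"
    using IG x right_ideal_sb_star[OF I x y] by (rule subgroup.m_closed)
  show "x \<otimes>\<^bsub>H\<^esub> y = x \<otimes>\<^bsub>G\<^esub> sb_star G H x y \<otimes>\<^bsub>G\<^esub> y"
    using xc y by (simp add: circ_eq_mult_sb_lambda sb_star_eq sb_lambda_closed G.m_assoc)
qed

lemma circ_decomposition_imp_mult_decomposition:
  assumes dec: "\<forall>z\<in>carrier G. \<exists>p\<in>P. \<exists>q\<in>Q. z = p \<otimes>\<^bsub>H\<^esub> q"
    and P: "right_ideal G H P" and Q: "Q \<subseteq> carrier G"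
  shows "\<forall>z\<in>carrier G. \<exists>p\<in>P. \<exists>q\<in>Q. z = p \<otimes>\<^bsub>G\<^esub> q"
proof
  fix z assume "z \<in> carrier G"
  then obtain p q where p: "p \<in> P" and q: "q \<in> Q" and z: "z = p \<otimes>\<^bsub>H\<^esub> q"
    using dec by blast
  obtain p' where "p' \<in> P" and "p \<otimes>\<^bsub>H\<^esub> q = p' \<otimes>\<^bsub>G\<^esub> q"
    using right_ideal_circ_eq_mult[OF P p] q Q by blast
  then show "\<exists>p\<in>P. \<exists>q\<in>Q. z = p \<otimes>\<^bsub>G\<^esub> q"
    using q z by blast
qed

lemma normal_circ_swap:
  assumes N: "N \<lhd> H" and n: "n \<in> N" and x: "x \<in> carrier G"
  shows "\<exists>n'\<in>N. n \<otimes>\<^bsub>H\<^esub> x = x \<otimes>\<^bsub>H\<^esub> n'"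
proof
  have xH: "x \<in> carrier H" and nH: "n \<in> carrier H"
    using x n normal_imp_subgroup[OF N] subgroup.subset carrier_eq by blast+
  show "inv\<^bsub>H\<^esub> x \<otimes>\<^bsub>H\<^esub> n \<otimes>\<^bsub>H\<^esub> x \<in> N"
    using normal.inv_op_closed1[OF N xH n] .
  show "n \<otimes>\<^bsub>H\<^esub> x = x \<otimes>\<^bsub>H\<^esub> (inv\<^bsub>H\<^esub> x \<otimes>\<^bsub>H\<^esub> n \<otimes>\<^bsub>H\<^esub> x)"
    using xH nH by (simp add: H.m_assoc[symmetric])
qed

lemma normal_circ_decomposition_swap:
  assumes dec: "\<forall>z\<in>carrier G. \<exists>p\<in>P. \<exists>q\<in>Q. z = p \<otimes>\<^bsub>H\<^esub> q"
    and P: "P \<lhd> H" and Q: "Q \<subseteq> carrier G"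
  shows "\<forall>z\<in>carrier G. \<exists>q\<in>Q. \<exists>p\<in>P. z = q \<otimes>\<^bsub>H\<^esub> p"
proof
  fix z assume "z \<in> carrier G"
  then obtain p q where p: "p \<in> P" and q: "q \<in> Q" and z: "z = p \<otimes>\<^bsub>H\<^esub> q"
    using dec by blast
  obtain p' where "p' \<in> P" and "p \<otimes>\<^bsub>H\<^esub> q = q \<otimes>\<^bsub>H\<^esub> p'"
    using normal_circ_swap[OF P p] q Q by blast
  then show "\<exists>q\<in>Q. \<exists>p\<in>P. z = q \<otimes>\<^bsub>H\<^esub> p"
    using q z by blast
qed

lemma sb_lambda_fixes_sb_star:
  assumes P: "subgroup P G" "trivial_on G H P"
    and Q: "subgroup Q G" "trivial_on G H Q" "Q \<lhd> H"
    and factor: "\<forall>z\<in>carrier G. \<exists>g\<in>Q. \<exists>\<beta>\<in>P. z = g \<otimes>\<^bsub>G\<^esub> \<beta>"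
    and p: "p \<in> P" and z: "z \<in> carrier G" and q: "q \<in> Q"
  shows "sb_lambda G H q (sb_star G H p z) = sb_star G H p z"
proof -
  obtain g \<beta> where g: "g \<in> Q" and \<beta>: "\<beta> \<in> P" and z_eq: "z = g \<otimes>\<^bsub>G\<^esub> \<beta>"
    using factor z by blast
  have PG: "P \<subseteq> carrier G" and QG: "Q \<subseteq> carrier G"
    using P(1) Q(1) subgroup.subset by blast+
  then have pc: "p \<in> carrier G" and qc: "q \<in> carrier G" and gc: "g \<in> carrier G"
    and \<beta>c: "\<beta> \<in> carrier G"
    using p q g \<beta> by blast+
  have star_z: "sb_star G H p z = sb_star G H p g"
    unfolding z_eq using pc gc \<beta>c sb_lambda_trivial[OF P(2) PG p \<beta>] by (rule sb_star_mult_fixed)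
  obtain q' where q': "q' \<in> Q" and swap: "q \<otimes>\<^bsub>H\<^esub> p = p \<otimes>\<^bsub>H\<^esub> q'"
    using normal_circ_swap[OF Q(3) q pc] by blast
  have fix_g: "sb_lambda G H q g = g"
    using sb_lambda_trivial[OF Q(2) QG q g] .
  have "sb_lambda G H q (sb_lambda G H p g) = sb_lambda G H (p \<otimes>\<^bsub>H\<^esub> q') g"
    using qc pc gc by (simp add: sb_lambda_circ[symmetric] swap)
  also have "\<dots> = sb_lambda G H p g"
    using pc q' QG gc sb_lambda_trivial[OF Q(2) QG q' g] by (auto simp: sb_lambda_circ)
  finally have "sb_lambda G H q (sb_lambda G H p g) = sb_lambda G H p g" .
  then show ?thesis
    unfolding star_z unfolding sb_star_eq
    using qc pc gc by (simp add: sb_lambda_mult sb_lambda_inv sb_lambda_closed fix_g)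
qed

lemma sb_lambda_fixes_generate:
  assumes S: "S \<subseteq> carrier G" and a: "a \<in> carrier G"
    and fixed: "\<And>s. s \<in> S \<Longrightarrow> sb_lambda G H a s = s"
    and x: "x \<in> generate G S"
  shows "sb_lambda G H a x = x"
  using x
proof (induction rule: generate.induct)
  case one
  then show ?case using sb_lambda_one[OF a] .
next
  case (incl h)
  then show ?case by (rule fixed)
next
  case (inv h)
  then have "h \<in> carrier G"
    using S by blast
  with inv show ?case using a fixed by (simp add: sb_lambda_inv)
next
  case (eng h1 h2)
  then show ?case using S a by (simp add: sb_lambda_mult G.generate_in_carrier)
qed

lemma sb_star_set_carrier_eq_one:
  assumes T: "T \<subseteq> carrier G"
    and fixed: "\<And>a t. a \<in> carrier G \<Longrightarrow> t \<in> T \<Longrightarrow> sb_lambda G H a t = t"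
  shows "sb_star_set G H (carrier G) T = {\<one>\<^bsub>G\<^esub>}"
proof
  have "{w. \<exists>a\<in>carrier G. \<exists>t\<in>T. w = sb_star G H a t} \<subseteq> {\<one>\<^bsub>G\<^esub>}"
  proof
    fix w assume "w \<in> {w. \<exists>a\<in>carrier G. \<exists>t\<in>T. w = sb_star G H a t}"
    then obtain a t where a: "a \<in> carrier G" and t: "t \<in> T" and w: "w = sb_star G H a t"
      by blast
    have "t \<in> carrier G"
      using T t by blast
    then show "w \<in> {\<one>\<^bsub>G\<^esub>}"
      unfolding w sb_star_eq using fixed[OF a t] by simp
  qed
  then show "sb_star_set G H (carrier G) T \<subseteq> {\<one>\<^bsub>G\<^esub>}"
    unfolding sb_star_set_def using G.triv_subgroup by (rule G.generate_subgroup_incl)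
  show "{\<one>\<^bsub>G\<^esub>} \<subseteq> sb_star_set G H (carrier G) T"
    unfolding sb_star_set_def by (simp add: generate.one)
qed

lemma sb_lambda_fixes_sb_star_of_factorization:
  assumes B: "trivial_on G H B" "B \<lhd> H" "right_ideal G H B"
    and C: "trivial_on G H C" "C \<lhd> H" "right_ideal G H C"
    and factor: "carrier G = {b \<otimes>\<^bsub>H\<^esub> c | b c. b \<in> B \<and> c \<in> C}"
    and a: "a \<in> carrier G" and s: "s \<in> carrier G" and t: "t \<in> carrier G"
  shows "sb_lambda G H a (sb_star G H s t) = sb_star G H s t"
proof -
  have BG: "subgroup B G" and CG: "subgroup C G"
    using B(3) C(3) unfolding right_ideal_def by blast+
  then have Bc: "B \<subseteq> carrier G" and Cc: "C \<subseteq> carrier G"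
    using subgroup.subset by blast+
  have factor_circ: "\<forall>z\<in>carrier G. \<exists>b\<in>B. \<exists>c\<in>C. z = b \<otimes>\<^bsub>H\<^esub> c"
    using factor by blast
  then have factor_BC: "\<forall>z\<in>carrier G. \<exists>b\<in>B. \<exists>c\<in>C. z = b \<otimes>\<^bsub>G\<^esub> c"
    using B(3) Cc by (rule circ_decomposition_imp_mult_decomposition)
  from factor_circ have "\<forall>z\<in>carrier G. \<exists>c\<in>C. \<exists>b\<in>B. z = c \<otimes>\<^bsub>H\<^esub> b"
    using B(2) Cc by (rule normal_circ_decomposition_swap)
  then have factor_CB: "\<forall>z\<in>carrier G. \<exists>c\<in>C. \<exists>b\<in>B. z = c \<otimes>\<^bsub>G\<^esub> b"
    using C(3) Bc by (rule circ_decomposition_imp_mult_decomposition)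
  obtain b1 c1 where b1: "b1 \<in> B" and c1: "c1 \<in> C" and a_eq: "a = b1 \<otimes>\<^bsub>H\<^esub> c1"
    using factor a by blast
  obtain b c where b: "b \<in> B" and c: "c \<in> C" and s_eq: "s = b \<otimes>\<^bsub>H\<^esub> c"
    using factor s by blast
  define u where "u = sb_lambda G H c t"
  have u: "u \<in> carrier G"
    unfolding u_def using c Cc t sb_lambda_closed by blast
  have b1c: "b1 \<in> carrier G" and c1c: "c1 \<in> carrier G" and bc: "b \<in> carrier G"
    and cc: "c \<in> carrier G"
    using b1 c1 b c Bc Cc by blast+
  have star_s: "sb_star G H s t = sb_star G H b u \<otimes>\<^bsub>G\<^esub> sb_star G H c t"
    unfolding s_eq u_def using bc cc t by (rule sb_star_circ)
  have lambda_a: "sb_lambda G H a x = sb_lambda G H b1 (sb_lambda G H c1 x)"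
    if "x \<in> carrier G" for x
    unfolding a_eq using b1c c1c that by (rule sb_lambda_circ)
  have "sb_lambda G H a (sb_star G H b u) = sb_star G H b u"
    using sb_lambda_fixes_sb_star[OF BG B(1) CG C(1,2) factor_CB b u c1]
      sb_lambda_trivial[OF B(1) Bc b1 right_ideal_sb_star[OF B(3) b u]]
    by (simp add: lambda_a sb_star_closed bc u)
  moreover have "sb_lambda G H a (sb_star G H c t) = sb_star G H c t"
    using sb_lambda_trivial[OF C(1) Cc c1 right_ideal_sb_star[OF C(3) c t]]
      sb_lambda_fixes_sb_star[OF CG C(1) BG B(1,2) factor_BC c t b1]
    by (simp add: lambda_a sb_star_closed cc t)
  ultimately show ?thesis
    unfolding star_s using a bc cc t u by (simp add: sb_lambda_mult sb_star_closed)
qed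

end

theorem theorem1p3:
  fixes G H :: "'a monoid" and B C :: "'a set"
  assumes "skew_brace G H"
    and "sub_skew_brace G H B" and "sub_skew_brace G H C"
    and "carrier G = {b \<otimes>\<^bsub>H\<^esub> c | b c. b \<in> B \<and> c \<in> C}"
    and "trivial_on G H B" and "trivial_on G H C"
    and "B \<lhd> H" and "C \<lhd> H"
    and "right_ideal G H B" and "right_ideal G H C"
  shows "sb_star_set G H (carrier G) (sb_star_set G H (carrier G) (carrier G)) = {\<one>\<^bsub>G\<^esub>}"
proof -
  \<comment> \<open>The sub-skew brace hypotheses are implied by the right ideal and normality ones.\<close>
  interpret skew_brace_pair G H
    using assms(1) by unfold_locales
  let ?S = "{w. \<exists>s\<in>carrier G. \<exists>t\<in>carrier G. w = sb_star G H s t}"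
  have S: "?S \<subseteq> carrier G"
    by (auto simp: sb_star_closed)
  have "\<And>a x. a \<in> carrier G \<Longrightarrow> x \<in> ?S \<Longrightarrow> sb_lambda G H a x = x"
    using sb_lambda_fixes_sb_star_of_factorization[OF assms(5,7,9,6,8,10,4)] by blast
  then have fixed: "\<And>a x. a \<in> carrier G \<Longrightarrow> x \<in> sb_star_set G H (carrier G) (carrier G)
      \<Longrightarrow> sb_lambda G H a x = x"
    unfolding sb_star_set_def using sb_lambda_fixes_generate[OF S] by blast
  have "sb_star_set G H (carrier G) (carrier G) \<subseteq> carrier G"
    unfolding sb_star_set_def using S by (rule G.generate_incl)
  then show ?thesis
    using fixed by (rule sb_star_set_carrier_eq_one)
qed

end
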